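(* Let $f(x)=\frac1n\sum_{i=1}^n f_i(x)$ on $\mathbb{R}^d$, where each $f_i$ is convex and $L$-smooth, and let $\mathcal X^\star$ (assumed nonempty) be the set of minimizers of $f$. Consider the following algorithm (Acc-SVRG-G) with parameters $\tau_k\in(0,1)$, $p_k\in(0,1]$: set $z_0=\tilde x_0=x_0$, $\alpha_k=\frac{L\tau_k}{1-\tau_k}$, and for $k=0,1,\dots$: $y_k=\tau_kz_k+(1-\tau_k)\big(\tilde x_k-\frac1L\nabla f(\tilde x_k)\big)$; $z_{k+1}=\arg\min_x\{\langle\mathcal G_k,x\rangle+\frac{\alpha_k}{2}\|x-z_k\|^2\}$, where $\mathcal G_k=\nabla f_{i_k}(y_k)-\nabla f_{i_k}(\tilde x_k)+\nabla f(\tilde x_k)$ with $i_k$ sampled uniformly from $\{1,\dots,n\}$ independently of the past; $\tilde x_{k+1}=y_k$ with probability $p_k$ and $\tilde x_{k+1}=\tilde x_k$ with probability $1-p_k$. Then for every $k\ge0$ and every $x^\star\in\mathcal X^\star$, $$\frac{1-\tau_k}{\tau_k^2p_k}\mathbb E[f(\tilde x_{k+1})-f(x^\star)]+\frac L2\mathbb E\|z_{k+1}-x^\star\|^2+\frac{(1-\tau_k)^2}{2L\tau_k^2}\mathbb E\|\nabla f(\tilde x_k)\|^2\le\frac{(1-\tau_kp_k)(1-\tau_k)}{\tau_k^2p_k}\mathbb E[f(\tilde x_k)-f(x^\star)]+\frac L2\mathbb E\|z_k-x^\star\|^2,$$ where $\mathbb E$ is the total expectation.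
   Context: $L$-smooth means $\|\nabla f_i(x)-\nabla f_i(y)\|\le L\|x-y\|$ for all $x,y$; norms are Euclidean. *)

theory Defs
  imports "HOL-Analysis.Analysis" "HOL-Probability.Probability"
begin

definition fsum :: "nat \<Rightarrow> (nat \<Rightarrow> real ^ 'd \<Rightarrow> real) \<Rightarrow> real ^ 'd \<Rightarrow> real" where
  "fsum n fi x = (1 / real n) * (\<Sum>i<n. fi i x)"

definition gradf :: "nat \<Rightarrow> (nat \<Rightarrow> real ^ 'd \<Rightarrow> real ^ 'd) \<Rightarrow> real ^ 'd \<Rightarrow> real ^ 'd" where
  "gradf n g x = (1 / real n) *\<^sub>R (\<Sum>i<n. g i x)"

definition svrg_step ::
  "real \<Rightarrow> nat \<Rightarrow> (nat \<Rightarrow> real ^ 'd \<Rightarrow> real ^ 'd) \<Rightarrow> real \<Rightarrow>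
   ((real ^ 'd) \<times> (real ^ 'd)) \<Rightarrow> nat \<Rightarrow> bool \<Rightarrow> ((real ^ 'd) \<times> (real ^ 'd))" where
  "svrg_step L n g tau s i b =
     (let z = fst s; xt = snd s;
          y = tau *\<^sub>R z + (1 - tau) *\<^sub>R (xt - (1 / L) *\<^sub>R gradf n g xt);
          G = g i y - g i xt + gradf n g xt;
          alpha = L * tau / (1 - tau);
          z' = arg_min (\<lambda>x. G \<bullet> x + alpha / 2 * (norm (x - z))\<^sup>2) (\<lambda>_. True);
          xt' = (if b then y else xt)
      in (z', xt'))"

primrec svrg_dist ::
  "real \<Rightarrow> nat \<Rightarrow> (nat \<Rightarrow> real ^ 'd \<Rightarrow> real ^ 'd) \<Rightarrow> (nat \<Rightarrow> real) \<Rightarrow> (nat \<Rightarrow> real) \<Rightarrow>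
   real ^ 'd \<Rightarrow> nat \<Rightarrow> ((real ^ 'd) \<times> (real ^ 'd)) pmf" where
  "svrg_dist L n g tau p x0 0 = return_pmf (x0, x0)"
| "svrg_dist L n g tau p x0 (Suc k) =
     bind_pmf (svrg_dist L n g tau p x0 k) (\<lambda>s.
       bind_pmf (pmf_of_set {..<n}) (\<lambda>i.
         map_pmf (\<lambda>b. svrg_step L n g (tau k) s i b) (bernoulli_pmf (p k))))"

end

theory Submission
  imports Defs
begin

(* Conditionally on the state (z, xt), z' = z - G / alpha is a gradient step along the
   estimator G = grad f_i(y) - grad f_i(xt) + grad f(xt), which is unbiased for grad f(y).
   Expanding |z' - xs|^2, co-coercivity of each grad f_i bounds the second moment of
   grad f_i(y) - grad f_i(xt) by 2 L times the Bregman divergence f(xt) - f(y) - <grad f(y), xt - y>,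
   and the definition of y trades tau (z - xs) for y - xs, xt - xs and grad f(xt): all terms in
   grad f(xt) cancel except |grad f(xt)|^2, the gain on the left. Convexity,
   f(y) - f(xs) <= <grad f(y), y - xs>, closes the one-step estimate. All distributions are finitely supported, so the total expectation follows by
   averaging the one-step estimate over the state. *)

lemma has_real_derivative_along_line:
  fixes F :: "'a::real_inner \<Rightarrow> real"
  assumes "(F has_derivative (\<lambda>h. G \<bullet> h)) (at (y + t *\<^sub>R d))"
  shows "((\<lambda>t. F (y + t *\<^sub>R d)) has_real_derivative (G \<bullet> d)) (at t)"
proof -
  have "((\<lambda>t. y + t *\<^sub>R d) has_derivative (\<lambda>s. s *\<^sub>R d)) (at t)"
    by (auto intro!: derivative_eq_intros)
  from has_derivative_compose[OF this assms]
  have "((\<lambda>t. F (y + t *\<^sub>R d)) has_derivative (\<lambda>s. (G \<bullet> d) * s)) (at t)"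
    by (simp add: mult.commute)
  then show ?thesis by (simp add: has_field_derivative_def)
qed

lemma convex_on_gradient_inequality:
  fixes F :: "'a::real_inner \<Rightarrow> real"
  assumes cvx: "convex_on UNIV F" and deriv: "(F has_derivative (\<lambda>h. G \<bullet> h)) (at y)"
  shows "F y + G \<bullet> (x - y) \<le> F x"
proof -
  define \<phi> where "\<phi> t = F (y + t *\<^sub>R (x - y))" for t :: real
  have "convex_on UNIV \<phi>"
  proof (rule convex_onI)
    fix t a b :: real assume "0 < t" "t < 1"
    have "y + ((1 - t) * a + t * b) *\<^sub>R (x - y)
        = (1 - t) *\<^sub>R (y + a *\<^sub>R (x - y)) + t *\<^sub>R (y + b *\<^sub>R (x - y))"
      by (simp add: algebra_simps)
    with convex_onD[OF cvx, of t] \<open>0 < t\<close> \<open>t < 1\<close>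
    show "\<phi> ((1 - t) *\<^sub>R a + t *\<^sub>R b) \<le> (1 - t) * \<phi> a + t * \<phi> b"
      by (simp add: \<phi>_def)
  qed simp
  moreover have "(\<phi> has_real_derivative (G \<bullet> (x - y))) (at 0)"
    unfolding \<phi>_def by (rule has_real_derivative_along_line) (use deriv in simp)
  ultimately have "\<phi> 1 - \<phi> 0 \<ge> (G \<bullet> (x - y)) * (1 - 0)"
    by (intro convex_on_imp_above_tangent) auto
  then show ?thesis by (simp add: \<phi>_def)
qed

lemma lipschitz_gradient_upper_bound:
  fixes F :: "'a::real_inner \<Rightarrow> real"
  assumes deriv: "\<And>x. (F has_derivative (\<lambda>h. G x \<bullet> h)) (at x)"
    and lip: "\<And>x y. norm (G x - G y) \<le> L * norm (x - y)"
  shows "F u \<le> F x + G x \<bullet> (u - x) + L / 2 * (norm (u - x))\<^sup>2"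
proof -
  define d where "d = u - x"
  define \<psi> where "\<psi> t = F (x + t *\<^sub>R d) - t * (G x \<bullet> d) - L * t\<^sup>2 / 2 * (norm d)\<^sup>2" for t :: real
  have "\<psi> 1 \<le> \<psi> 0"
  proof (rule DERIV_nonpos_imp_nonincreasing[of 0 1])
    fix t :: real assume t: "0 \<le> t" "t \<le> 1"
    have "(\<psi> has_real_derivative (G (x + t *\<^sub>R d) \<bullet> d - G x \<bullet> d - L * t * (norm d)\<^sup>2)) (at t)"
      unfolding \<psi>_def by (rule derivative_eq_intros has_real_derivative_along_line deriv refl | simp)+
    moreover have "G (x + t *\<^sub>R d) \<bullet> d - G x \<bullet> d \<le> L * t * (norm d)\<^sup>2"
    proof -
      have "G (x + t *\<^sub>R d) \<bullet> d - G x \<bullet> d \<le> norm (G (x + t *\<^sub>R d) - G x) * norm d"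
        by (metis inner_diff_left norm_cauchy_schwarz)
      also have "\<dots> \<le> L * norm (t *\<^sub>R d) * norm d"
        using lip[of "x + t *\<^sub>R d" x] by (intro mult_right_mono) auto
      finally show ?thesis using t by (simp add: power2_eq_square mult.assoc)
    qed
    ultimately show "\<exists>y. (\<psi> has_real_derivative y) (at t) \<and> y \<le> 0" by auto
  qed simp
  then show ?thesis by (simp add: \<psi>_def d_def)
qed

text \<open>Apply the gradient inequality at \<open>y\<close> to the gradient step
  \<open>x - (G x - G y) /\<^sub>R L\<close>, whose value the upper bound controls from \<open>x\<close>.\<close>
lemma lipschitz_gradient_cocoercive:
  fixes F :: "'a::real_inner \<Rightarrow> real"
  assumes deriv: "\<And>x. (F has_derivative (\<lambda>h. G x \<bullet> h)) (at x)"
    and lip: "\<And>x y. norm (G x - G y) \<le> L * norm (x - y)"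
    and cvx: "convex_on UNIV F" and L: "L > 0"
  shows "(norm (G x - G y))\<^sup>2 \<le> 2 * L * (F x - F y - G y \<bullet> (x - y))"
proof -
  define D where "D = G x - G y"
  define u where "u = x - (1 / L) *\<^sub>R D"
  have "F y + G y \<bullet> (u - y) \<le> F u"
    by (rule convex_on_gradient_inequality[OF cvx deriv])
  also have "\<dots> \<le> F x + G x \<bullet> (u - x) + L / 2 * (norm (u - x))\<^sup>2"
    by (rule lipschitz_gradient_upper_bound[OF deriv lip])
  also have "\<dots> = F x - (G x \<bullet> D) / L + (norm D)\<^sup>2 / (2 * L)"
    using L by (simp add: u_def power2_eq_square)
  finally have "F y + G y \<bullet> (x - y) \<le> F x - (G x \<bullet> D - G y \<bullet> D) / L + (norm D)\<^sup>2 / (2 * L)"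
    by (simp add: u_def inner_diff_right diff_divide_distrib)
  also have "G x \<bullet> D - G y \<bullet> D = (norm D)\<^sup>2"
    by (simp add: D_def power2_norm_eq_inner inner_diff_left)
  finally show ?thesis
    using L by (simp add: D_def field_simps)
qed

lemma power2_norm_diff_scaleR:
  fixes v w :: "'a::real_inner"
  shows "(norm (w - c *\<^sub>R v))\<^sup>2 = (norm w)\<^sup>2 - 2 * c * (v \<bullet> w) + c\<^sup>2 * (norm v)\<^sup>2"
  unfolding power2_norm_eq_inner
  by (simp add: inner_diff_left inner_diff_right inner_commute power2_eq_square algebra_simps)

lemma arg_min_linear_plus_quadratic:
  fixes G z :: "'a::real_inner"
  assumes "\<alpha> > 0"
  shows "arg_min (\<lambda>x. G \<bullet> x + \<alpha> / 2 * (norm (x - z))\<^sup>2) (\<lambda>_. True) = z - (1 / \<alpha>) *\<^sub>R G"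
proof -
  define m where "m = z - (1 / \<alpha>) *\<^sub>R G"
  define q where "q = (\<lambda>x. G \<bullet> x + \<alpha> / 2 * (norm (x - z))\<^sup>2)"
  have square: "q x = q m + \<alpha> / 2 * (norm (x - m))\<^sup>2" for x
  proof -
    have xz: "x - z = (x - m) - (1 / \<alpha>) *\<^sub>R G"
      by (simp add: m_def)
    have "q x = G \<bullet> x + \<alpha> / 2 * ((norm (x - m))\<^sup>2 - 2 * (1 / \<alpha>) * (G \<bullet> (x - m))
        + (1 / \<alpha>)\<^sup>2 * (norm G)\<^sup>2)"
      unfolding q_def xz power2_norm_diff_scaleR ..
    also have "\<dots> = G \<bullet> m + (norm G)\<^sup>2 / (2 * \<alpha>) + \<alpha> / 2 * (norm (x - m))\<^sup>2"
      using assms by (simp add: inner_diff_right power2_eq_square algebra_simps add_divide_distrib)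
    also have "G \<bullet> m + (norm G)\<^sup>2 / (2 * \<alpha>) = q m"
      using assms by (simp add: q_def m_def power_divide power2_eq_square)
    finally show ?thesis .
  qed
  have "q m \<le> q x" for x
    using assms by (simp add: square[of x])
  then have "is_arg_min q (\<lambda>_. True) m"
    by (auto simp: is_arg_min_def not_less)
  moreover have "x = m" if "is_arg_min q (\<lambda>_. True) x" for x
  proof -
    have "q x \<le> q m" using that by (auto simp: is_arg_min_def not_less)
    with assms show ?thesis by (simp add: square[of x] mult_le_0_iff)
  qed
  ultimately have "arg_min q (\<lambda>_. True) = m"
    by (metis arg_min_def someI)
  then show ?thesis unfolding q_def m_def .
qed

lemma sum_power2_norm_diff_scaleR:
  fixes v :: "'i \<Rightarrow> 'a::real_inner"
  shows "(\<Sum>i\<in>A. (norm (w - c *\<^sub>R v i))\<^sup>2)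
    = real (card A) * (norm w)\<^sup>2 - 2 * c * ((\<Sum>i\<in>A. v i) \<bullet> w) + c\<^sup>2 * (\<Sum>i\<in>A. (norm (v i))\<^sup>2)"
  by (simp add: power2_norm_diff_scaleR sum.distrib sum_subtractf inner_sum_left
      sum_distrib_left)

lemma mean_power2_norm_diff_scaleR_shifted:
  fixes X :: "nat \<Rightarrow> 'a::real_inner"
  assumes n: "n \<ge> 1" and sum_X: "(\<Sum>i<n. X i) = real n *\<^sub>R (b - a)"
  shows "(\<Sum>i<n. (norm (w - c *\<^sub>R (X i + a)))\<^sup>2) / real n
    = (norm w)\<^sup>2 - 2 * c * (b \<bullet> w) + c\<^sup>2 * ((\<Sum>i<n. (norm (X i))\<^sup>2) / real n + 2 * (b \<bullet> a) - (norm a)\<^sup>2)"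
proof -
  have nn: "real n > 0" using n by simp
  have "(\<Sum>i<n. (norm (X i + a))\<^sup>2) = real n * (norm a)\<^sup>2 + 2 * ((\<Sum>i<n. X i) \<bullet> a) + (\<Sum>i<n. (norm (X i))\<^sup>2)"
    using sum_power2_norm_diff_scaleR[of a "-1" X "{..<n}"] by (simp add: add.commute)
  also have "(\<Sum>i<n. X i) \<bullet> a = real n * (b \<bullet> a - (norm a)\<^sup>2)"
    by (simp add: sum_X inner_diff_left power2_norm_eq_inner)
  finally have sum_sq: "(\<Sum>i<n. (norm (X i + a))\<^sup>2)
      = (\<Sum>i<n. (norm (X i))\<^sup>2) + 2 * real n * (b \<bullet> a) - real n * (norm a)\<^sup>2"
    by (simp add: algebra_simps)
  have "(\<Sum>i<n. (norm (w - c *\<^sub>R (X i + a)))\<^sup>2)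
      = real n * (norm w)\<^sup>2 - 2 * c * ((\<Sum>i<n. X i + a) \<bullet> w) + c\<^sup>2 * (\<Sum>i<n. (norm (X i + a))\<^sup>2)"
    by (simp add: sum_power2_norm_diff_scaleR)
  also have "(\<Sum>i<n. X i + a) = real n *\<^sub>R b"
    by (simp add: sum.distrib sum_X sum_constant_scaleR algebra_simps)
  also note sum_sq
  finally show ?thesis
    using nn by (simp add: field_simps)
qed

lemma fsum_gradient_inequality:
  assumes grad: "\<And>i x. i < n \<Longrightarrow> (fi i has_derivative (\<lambda>h. g i x \<bullet> h)) (at x)"
    and cvx: "\<And>i. i < n \<Longrightarrow> convex_on UNIV (fi i)"
  shows "fsum n fi y + gradf n g y \<bullet> (x - y) \<le> fsum n fi x"
proof -
  have "(\<Sum>i<n. fi i y + g i y \<bullet> (x - y)) \<le> (\<Sum>i<n. fi i x)"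
    by (rule sum_mono) (simp add: convex_on_gradient_inequality[OF cvx grad])
  then have "1 / real n * (\<Sum>i<n. fi i y + g i y \<bullet> (x - y)) \<le> 1 / real n * (\<Sum>i<n. fi i x)"
    by (rule mult_left_mono) simp
  then show ?thesis
    by (simp add: fsum_def gradf_def sum.distrib inner_sum_left distrib_left)
qed

lemma mean_power2_norm_gradient_diff_le:
  assumes L: "L > 0"
    and grad: "\<And>i x. i < n \<Longrightarrow> (fi i has_derivative (\<lambda>h. g i x \<bullet> h)) (at x)"
    and cvx: "\<And>i. i < n \<Longrightarrow> convex_on UNIV (fi i)"
    and smooth: "\<And>i x y. i < n \<Longrightarrow> norm (g i x - g i y) \<le> L * norm (x - y)"
  shows "(\<Sum>i<n. (norm (g i y - g i x))\<^sup>2) / real n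
    \<le> 2 * L * (fsum n fi x - fsum n fi y - gradf n g y \<bullet> (x - y))"
proof -
  have "(\<Sum>i<n. (norm (g i y - g i x))\<^sup>2) \<le> (\<Sum>i<n. 2 * L * (fi i x - fi i y - g i y \<bullet> (x - y)))"
    by (rule sum_mono)
      (simp add: norm_minus_commute lipschitz_gradient_cocoercive[OF grad smooth cvx L])
  then have "(\<Sum>i<n. (norm (g i y - g i x))\<^sup>2) / real n
      \<le> (\<Sum>i<n. 2 * L * (fi i x - fi i y - g i y \<bullet> (x - y))) / real n"
    by (rule divide_right_mono) simp
  also have "\<dots> = 2 * L * (1 / real n * ((\<Sum>i<n. fi i x) - (\<Sum>i<n. fi i y) - (\<Sum>i<n. g i y) \<bullet> (x - y)))"
    by (simp add: sum_subtractf inner_sum_left flip: sum_distrib_left)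
  finally show ?thesis
    by (simp add: fsum_def gradf_def right_diff_distrib)
qed

lemma svrg_step_eq:
  assumes "L > 0" "0 < t" "t < 1"
    and y: "y = t *\<^sub>R z + (1 - t) *\<^sub>R (xt - (1 / L) *\<^sub>R gradf n g xt)"
  shows "svrg_step L n g t (z, xt) i c
    = (z - ((1 - t) / (L * t)) *\<^sub>R (g i y - g i xt + gradf n g xt), if c then y else xt)"
proof -
  have "L * t / (1 - t) > 0" using assms by simp
  from arg_min_linear_plus_quadratic[OF this] show ?thesis
    by (simp add: svrg_step_def y Let_def)
qed

lemma sum_gradient_eq_scaleR_gradf:
  "n \<ge> 1 \<Longrightarrow> (\<Sum>i<n. g i x) = real n *\<^sub>R gradf n g x"
  by (simp add: gradf_def)

lemma svrg_z_step_mean_distance: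
  assumes L: "L > 0" and t: "0 < t" "t < 1" and n: "n \<ge> 1"
    and y: "y = t *\<^sub>R z + (1 - t) *\<^sub>R (xt - (1 / L) *\<^sub>R gradf n g xt)"
  shows "L / 2 * ((\<Sum>i<n. (norm (z - ((1 - t) / (L * t)) *\<^sub>R (g i y - g i xt + gradf n g xt) - xs))\<^sup>2) / real n)
      + (1 - t)\<^sup>2 / (2 * L * t\<^sup>2) * (norm (gradf n g xt))\<^sup>2
    = L / 2 * (norm (z - xs))\<^sup>2
      - (1 - t) / t\<^sup>2 * (gradf n g y \<bullet> (y - xs) - (1 - t) * (gradf n g y \<bullet> (xt - xs)))
      + (1 - t)\<^sup>2 / (2 * L * t\<^sup>2) * ((\<Sum>i<n. (norm (g i y - g i xt))\<^sup>2) / real n)"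
proof -
  define a where "a = gradf n g xt"
  define b where "b = gradf n g y"
  define c where "c = (1 - t) / (L * t)"
  define X where "X i = g i y - g i xt" for i
  define V where "V = (\<Sum>i<n. (norm (X i))\<^sup>2) / real n"
  have sum_X: "(\<Sum>i<n. X i) = real n *\<^sub>R (b - a)"
    using n by (simp add: X_def sum_subtractf sum_gradient_eq_scaleR_gradf a_def b_def scaleR_diff_right)
  have "z - c *\<^sub>R (X i + a) - xs = (z - xs) - c *\<^sub>R (X i + a)" for i
    by simp
  then have mean_dist: "(\<Sum>i<n. (norm (z - c *\<^sub>R (X i + a) - xs))\<^sup>2) / real n
      = (norm (z - xs))\<^sup>2 - 2 * c * (b \<bullet> (z - xs)) + c\<^sup>2 * (V + 2 * (b \<bullet> a) - (norm a)\<^sup>2)"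
    unfolding V_def by (simp only: mean_power2_norm_diff_scaleR_shifted[OF n sum_X])
  have coupling: "t * (b \<bullet> (z - xs)) = b \<bullet> (y - xs) - (1 - t) * (b \<bullet> (xt - xs)) + (1 - t) / L * (b \<bullet> a)"
    by (simp add: y a_def inner_add_right inner_diff_right algebra_simps)
  have "L / 2 * ((\<Sum>i<n. (norm (z - c *\<^sub>R (X i + a) - xs))\<^sup>2) / real n) + (1 - t)\<^sup>2 / (2 * L * t\<^sup>2) * (norm a)\<^sup>2
      = L / 2 * (norm (z - xs))\<^sup>2 - (1 - t) / t\<^sup>2 * (t * (b \<bullet> (z - xs)))
        + (1 - t)\<^sup>2 / (2 * L * t\<^sup>2) * (V + 2 * (b \<bullet> a))"
    unfolding mean_dist using L t by (simp add: c_def power2_eq_square field_simps)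
  also have "\<dots> = L / 2 * (norm (z - xs))\<^sup>2 - (1 - t) / t\<^sup>2 * (b \<bullet> (y - xs) - (1 - t) * (b \<bullet> (xt - xs)))
        + (1 - t)\<^sup>2 / (2 * L * t\<^sup>2) * V"
    using L t by (simp add: coupling power2_eq_square field_simps)
  finally show ?thesis
    by (simp add: X_def V_def a_def b_def c_def)
qed

lemma svrg_z_step_bound:
  assumes L: "L > 0" and t: "0 < t" "t < 1" and n: "n \<ge> 1"
    and grad: "\<And>i x. i < n \<Longrightarrow> (fi i has_derivative (\<lambda>h. g i x \<bullet> h)) (at x)"
    and cvx: "\<And>i. i < n \<Longrightarrow> convex_on UNIV (fi i)"
    and smooth: "\<And>i x y. i < n \<Longrightarrow> norm (g i x - g i y) \<le> L * norm (x - y)"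
    and y: "y = t *\<^sub>R z + (1 - t) *\<^sub>R (xt - (1 / L) *\<^sub>R gradf n g xt)"
  shows "L / 2 * ((\<Sum>i<n. (norm (z - ((1 - t) / (L * t)) *\<^sub>R (g i y - g i xt + gradf n g xt) - xs))\<^sup>2) / real n)
      + (1 - t)\<^sup>2 / (2 * L * t\<^sup>2) * (norm (gradf n g xt))\<^sup>2
    \<le> L / 2 * (norm (z - xs))\<^sup>2
      + (1 - t) / t\<^sup>2 * ((1 - t) * (fsum n fi xt - fsum n fi xs) - (fsum n fi y - fsum n fi xs))"
proof -
  define F where "F = fsum n fi"
  define b where "b = gradf n g y"
  have variance: "(\<Sum>i<n. (norm (g i y - g i xt))\<^sup>2) / real n \<le> 2 * L * (F xt - F y - b \<bullet> (xt - y))"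
    unfolding F_def b_def by (rule mean_power2_norm_gradient_diff_le[OF L grad cvx smooth])
  have "F y + b \<bullet> (xs - y) \<le> F xs"
    unfolding F_def b_def by (rule fsum_gradient_inequality[OF grad cvx])
  then have convexity: "t * (F y - F xs) \<le> t * (b \<bullet> (y - xs))"
    using t by (simp add: inner_diff_right)
  note svrg_z_step_mean_distance[OF L t n y, of xs, folded b_def]
  also have "L / 2 * (norm (z - xs))\<^sup>2 - (1 - t) / t\<^sup>2 * (b \<bullet> (y - xs) - (1 - t) * (b \<bullet> (xt - xs)))
        + (1 - t)\<^sup>2 / (2 * L * t\<^sup>2) * ((\<Sum>i<n. (norm (g i y - g i xt))\<^sup>2) / real n)
      \<le> L / 2 * (norm (z - xs))\<^sup>2 - (1 - t) / t\<^sup>2 * (b \<bullet> (y - xs) - (1 - t) * (b \<bullet> (xt - xs)))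
        + (1 - t)\<^sup>2 / (2 * L * t\<^sup>2) * (2 * L * (F xt - F y - b \<bullet> (xt - y)))"
    using variance L by (intro add_left_mono mult_left_mono) auto
  also have "\<dots> = L / 2 * (norm (z - xs))\<^sup>2 + (1 - t) / t\<^sup>2 * ((1 - t) * (F xt - F y) - t * (b \<bullet> (y - xs)))"
    using L t by (simp add: inner_diff_right power2_eq_square field_simps)
  also have "\<dots> \<le> L / 2 * (norm (z - xs))\<^sup>2 + (1 - t) / t\<^sup>2 * ((1 - t) * (F xt - F xs) - (F y - F xs))"
    using convexity t by (intro add_left_mono mult_left_mono) (auto simp: algebra_simps)
  finally show ?thesis
    by (simp add: F_def)
qed

definition svrg_kernel ::
  "real \<Rightarrow> nat \<Rightarrow> (nat \<Rightarrow> real ^ 'd \<Rightarrow> real ^ 'd) \<Rightarrow> real \<Rightarrow> real \<Rightarrow>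
   (real ^ 'd) \<times> (real ^ 'd) \<Rightarrow> ((real ^ 'd) \<times> (real ^ 'd)) pmf" where
  "svrg_kernel L n g t q s =
     pmf_of_set {..<n} \<bind> (\<lambda>i. map_pmf (svrg_step L n g t s i) (bernoulli_pmf q))"

lemma svrg_dist_Suc_eq_bind:
  "svrg_dist L n g tau p x0 (Suc k) = svrg_dist L n g tau p x0 k \<bind> svrg_kernel L n g (tau k) (p k)"
  unfolding svrg_kernel_def[abs_def] by simp

lemma finite_set_pmf_svrg_kernel:
  "n \<ge> 1 \<Longrightarrow> finite (set_pmf (svrg_kernel L n g t q s))"
  by (simp add: svrg_kernel_def set_pmf_of_set lessThan_empty_iff)

lemma finite_set_pmf_svrg_dist:
  "n \<ge> 1 \<Longrightarrow> finite (set_pmf (svrg_dist L n g tau p x0 k))"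
  by (induction k)
    (simp_all del: svrg_dist.simps(2) add: svrg_dist_Suc_eq_bind finite_set_pmf_svrg_kernel)

lemma expectation_svrg_kernel:
  assumes "n \<ge> 1" "0 \<le> q" "q \<le> 1"
  shows "measure_pmf.expectation (svrg_kernel L n g t q s) h
    = (\<Sum>i<n. q * h (svrg_step L n g t s i True) + (1 - q) * h (svrg_step L n g t s i False)) / real n"
  using assms unfolding svrg_kernel_def
  by (subst pmf_expectation_bind_pmf_of_set)
    (auto simp: lessThan_empty_iff divide_inverse sum_distrib_left algebra_simps)

lemma expectation_bind_pmf_finite:
  fixes h :: "'b \<Rightarrow> real"
  assumes "finite (set_pmf M)" "\<And>x. x \<in> set_pmf M \<Longrightarrow> finite (set_pmf (N x))"
  shows "measure_pmf.expectation (M \<bind> N) h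
    = measure_pmf.expectation M (\<lambda>x. measure_pmf.expectation (N x) h)"
  using assms by (simp add: pmf_expectation_bind[OF assms(1) assms(2) order_refl]
      integral_measure_pmf_real mult.commute)

lemma svrg_kernel_expected_decrease:
  assumes L: "L > 0" and t: "0 < t" "t < 1" and q: "0 < q" "q \<le> 1" and n: "n \<ge> 1"
    and grad: "\<And>i x. i < n \<Longrightarrow> (fi i has_derivative (\<lambda>h. g i x \<bullet> h)) (at x)"
    and cvx: "\<And>i. i < n \<Longrightarrow> convex_on UNIV (fi i)"
    and smooth: "\<And>i x y. i < n \<Longrightarrow> norm (g i x - g i y) \<le> L * norm (x - y)"
  shows "(1 - t) / (t\<^sup>2 * q) *
      measure_pmf.expectation (svrg_kernel L n g t q s) (\<lambda>s. fsum n fi (snd s) - fsum n fi xs)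
    + L / 2 * measure_pmf.expectation (svrg_kernel L n g t q s) (\<lambda>s. (norm (fst s - xs))\<^sup>2)
    + (1 - t)\<^sup>2 / (2 * L * t\<^sup>2) * (norm (gradf n g (snd s)))\<^sup>2
    \<le> (1 - t * q) * (1 - t) / (t\<^sup>2 * q) * (fsum n fi (snd s) - fsum n fi xs)
    + L / 2 * (norm (fst s - xs))\<^sup>2"
proof -
  obtain z xt where s: "s = (z, xt)" by fastforce
  define y where "y = t *\<^sub>R z + (1 - t) *\<^sub>R (xt - (1 / L) *\<^sub>R gradf n g xt)"
  define F where "F = fsum n fi"
  define M where "M = (\<Sum>i<n. (norm (z - ((1 - t) / (L * t)) *\<^sub>R (g i y - g i xt + gradf n g xt) - xs))\<^sup>2) / real n"
  note step = svrg_step_eq[OF L t y_def]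
  have expected_value: "measure_pmf.expectation (svrg_kernel L n g t q s) (\<lambda>s. F (snd s) - F xs)
      = q * (F y - F xs) + (1 - q) * (F xt - F xs)"
    using n q by (simp add: expectation_svrg_kernel s step)
  have expected_distance: "measure_pmf.expectation (svrg_kernel L n g t q s) (\<lambda>s. (norm (fst s - xs))\<^sup>2) = M"
    using n q by (simp add: expectation_svrg_kernel s step M_def algebra_simps flip: sum_distrib_right)
  have "L / 2 * M + (1 - t)\<^sup>2 / (2 * L * t\<^sup>2) * (norm (gradf n g xt))\<^sup>2
      \<le> L / 2 * (norm (z - xs))\<^sup>2 + (1 - t) / t\<^sup>2 * ((1 - t) * (F xt - F xs) - (F y - F xs))"
    unfolding M_def F_def by (rule svrg_z_step_bound[OF L t n grad cvx smooth y_def])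
  moreover have "(1 - t) / (t\<^sup>2 * q) * (q * (F y - F xs) + (1 - q) * (F xt - F xs))
      + (1 - t) / t\<^sup>2 * ((1 - t) * (F xt - F xs) - (F y - F xs))
      = (1 - t * q) * (1 - t) / (t\<^sup>2 * q) * (F xt - F xs)"
    using t q by (simp add: power2_eq_square field_simps)
  ultimately show ?thesis
    unfolding expected_value expected_distance F_def[symmetric] by (simp add: s)
qed

theorem proposition2:
  fixes n :: nat and L :: real
    and fi :: "nat \<Rightarrow> real ^ 'd \<Rightarrow> real"
    and g :: "nat \<Rightarrow> real ^ 'd \<Rightarrow> real ^ 'd"
    and tau p :: "nat \<Rightarrow> real"
    and x0 xs :: "real ^ 'd" and k :: nat
  assumes n_pos: "n \<ge> 1"
    and L_pos: "L > 0"
    and grad: "\<And>i x. i < n \<Longrightarrow> (fi i has_derivative (\<lambda>h. g i x \<bullet> h)) (at x)"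
    and cvx: "\<And>i. i < n \<Longrightarrow> convex_on UNIV (fi i)"
    and smooth: "\<And>i x y. i < n \<Longrightarrow> norm (g i x - g i y) \<le> L * norm (x - y)"
    and tau: "\<And>j. 0 < tau j \<and> tau j < 1"
    and p: "\<And>j. 0 < p j \<and> p j \<le> 1"
    and xs_min: "\<And>y. fsum n fi xs \<le> fsum n fi y"
  shows
   "(1 - tau k) / ((tau k)\<^sup>2 * p k) *
      measure_pmf.expectation (svrg_dist L n g tau p x0 (Suc k)) (\<lambda>s. fsum n fi (snd s) - fsum n fi xs)
    + L / 2 * measure_pmf.expectation (svrg_dist L n g tau p x0 (Suc k)) (\<lambda>s. (norm (fst s - xs))\<^sup>2)
    + (1 - tau k)\<^sup>2 / (2 * L * (tau k)\<^sup>2) *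
      measure_pmf.expectation (svrg_dist L n g tau p x0 k) (\<lambda>s. (norm (gradf n g (snd s)))\<^sup>2)
    \<le> (1 - tau k * p k) * (1 - tau k) / ((tau k)\<^sup>2 * p k) *
      measure_pmf.expectation (svrg_dist L n g tau p x0 k) (\<lambda>s. fsum n fi (snd s) - fsum n fi xs)
    + L / 2 * measure_pmf.expectation (svrg_dist L n g tau p x0 k) (\<lambda>s. (norm (fst s - xs))\<^sup>2)"
proof -
  define D where "D = svrg_dist L n g tau p x0 k"
  define K where "K = svrg_kernel L n g (tau k) (p k)"
  have fin: "finite (set_pmf D)" "\<And>s. finite (set_pmf (K s))"
    unfolding D_def K_def using n_pos by (simp_all add: finite_set_pmf_svrg_dist finite_set_pmf_svrg_kernel)
  note integrable = integrable_measure_pmf_finite[OF fin(1)]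
  have expectation_Suc: "measure_pmf.expectation (svrg_dist L n g tau p x0 (Suc k)) h
      = measure_pmf.expectation D (\<lambda>s. measure_pmf.expectation (K s) h)" for h :: "_ \<Rightarrow> real"
    unfolding svrg_dist_Suc_eq_bind D_def[symmetric] K_def[symmetric]
    by (simp add: expectation_bind_pmf_finite fin)
  have "0 < tau k" "tau k < 1" "0 < p k" "p k \<le> 1"
    using tau[of k] p[of k] by auto
  note one_step = svrg_kernel_expected_decrease[where fi = fi and g = g and xs = xs,
      OF L_pos this n_pos grad cvx smooth, folded K_def]
  show ?thesis
    unfolding expectation_Suc D_def[symmetric]
    using integral_mono[OF integrable integrable one_step]
    by (simp add: integrable)
qed

end
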